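(* In the setting of the context, for every $H\in\mathbb S^n$, $$\langle\mathcal D(H),\mathcal D^\perp(H)\rangle=2\langle\Theta\circ H_O,\Theta^\perp\circ H_O\rangle\ge0,$$ with equality only if $H_O=0$, and $$\|H\|_F^2-\|\mathcal M(H)\|_F^2=\|\mathcal P\mathcal D(H)\|_F^2+\|\mathcal P^\perp\mathcal D^\perp(H)\|_F^2+4\langle\Theta\circ H_O,\Theta^\perp\circ H_O\rangle.$$
   Context: $\mathbb S^n$: real symmetric $n\times n$ matrices, $\langle X,Y\rangle=\operatorname{tr}(X^\top Y)$, Frobenius norm. $\mathcal AX=(\langle A_i,X\rangle)_{i=1}^m$ with $A_i\in\mathbb S^n$, surjective; $\mathcal P=\mathcal A^*(\mathcal A\mathcal A^* )^{-1}\mathcal A$, $\mathcal P^\perp=\mathrm{Id}-\mathcal P$. $Z_\star=X_\star-\sigma S_\star$ ($\sigma>0$) for a strictly complementary KKT point of the SDP pair min $\langle C,X\rangle$ s.t. $\mathcal AX=b$, $X\succeq0$ / max $b^\top y$ s.t. $\mathcal A^*y+S=C$, $S\succeq0$; $Z_\star=Q_\star\operatorname{diag}(\lambda_1,\dots,\lambda_n)Q_\star^\top$ with $Q_\star$ orthogonal, $\lambda_1\ge\dots\ge\lambda_r>0>\lambda_{r+1}\ge\dots\ge\lambda_n$, $r=\operatorname{rank}X_\star$. $\Theta\in\mathbb R^{(n-r)\times r}$, $\Theta_{ij}=\lambda_j/(\lambda_j-\lambda_{i+r})$; $\Theta^\perp=E_{(n-r)\times r}-\Theta$ (all-ones minus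 $\Theta$); $\Omega=\begin{pmatrix}E_r&\Theta^\top\\\Theta&0\end{pmatrix}$. For $H\in\mathbb S^n$, $Q_\star^\top HQ_\star=\begin{pmatrix}H_X&H_O^\top\\H_O&H_S\end{pmatrix}$ with $H_O\in\mathbb R^{(n-r)\times r}$. $\mathcal D(H)=Q_\star(\Omega\circ(Q_\star^\top HQ_\star))Q_\star^\top$ ($\circ$ Hadamard), $\mathcal D^\perp(H)=H-\mathcal D(H)$, $\mathcal M(H)=\mathcal P\mathcal D^\perp(H)+\mathcal P^\perp\mathcal D(H)$. *)

theory Defs
  imports "HOL-Analysis.Analysis"
begin

type_synonym 'n smat = "real^'n^'n"

definition symm :: "('n::finite) smat \<Rightarrow> bool" where
  "symm M \<longleftrightarrow> transpose M = M"

definition psd :: "('n::finite) smat \<Rightarrow> bool" where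
  "psd M \<longleftrightarrow> symm M \<and> (\<forall>x. 0 \<le> x \<bullet> (M *v x))"

definition frob_inner :: "('n::finite) smat \<Rightarrow> 'n smat \<Rightarrow> real" where
  "frob_inner X Y = trace (transpose X ** Y)"

definition frob_norm :: "('n::finite) smat \<Rightarrow> real" where
  "frob_norm X = sqrt (frob_inner X X)"

definition hadamard :: "real^('n::finite)^('m::finite) \<Rightarrow> real^'n^'m \<Rightarrow> real^'n^'m" where
  "hadamard M N = (\<chi> i j. M $ i $ j * N $ i $ j)"

definition diagm :: "(('n::finite) \<Rightarrow> real) \<Rightarrow> real^'n^'n" where
  "diagm l = (\<chi> i j. if i = j then l i else 0)"

definition Aop :: "('m \<Rightarrow> ('n::finite) smat) \<Rightarrow> 'n smat \<Rightarrow> real^'m" where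
  "Aop A X = (\<chi> i. frob_inner (A i) X)"

definition Aadj :: "(('m::finite) \<Rightarrow> ('n::finite) smat) \<Rightarrow> real^'m \<Rightarrow> 'n smat" where
  "Aadj A y = (\<Sum>i\<in>UNIV. (y $ i) *\<^sub>R A i)"

definition AAadj :: "(('m::finite) \<Rightarrow> ('n::finite) smat) \<Rightarrow> real^'m^'m" where
  "AAadj A = (\<chi> i j. frob_inner (A i) (A j))"

definition Pop :: "(('m::finite) \<Rightarrow> ('n::finite) smat) \<Rightarrow> 'n smat \<Rightarrow> 'n smat" where
  "Pop A H = Aadj A (matrix_inv (AAadj A) *v Aop A H)"

definition Pperp :: "(('m::finite) \<Rightarrow> ('n::finite) smat) \<Rightarrow> 'n smat \<Rightarrow> 'n smat" where
  "Pperp A H = H - Pop A H"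

text \<open>Eigenvalues lam are indexed by 'n; the "X-block" indices are {i. lam i > 0},
  the "S-block" indices are {i. lam i < 0}. theta lam i j for lam i < 0 < lam j
  is the entry Theta_{ij} = lam_j / (lam_j - lam_i).\<close>
definition theta :: "(('n::finite) \<Rightarrow> real) \<Rightarrow> 'n \<Rightarrow> 'n \<Rightarrow> real" where
  "theta lam i j = lam j / (lam j - lam i)"

definition Omega :: "(('n::finite) \<Rightarrow> real) \<Rightarrow> real^'n^'n" where
  "Omega lam = (\<chi> i j.
     if 0 < lam i \<and> 0 < lam j then 1
     else if lam i < 0 \<and> 0 < lam j then theta lam i j
     else if 0 < lam i \<and> lam j < 0 then theta lam j i
     else 0)"

definition Dop :: "('n::finite) smat \<Rightarrow> ('n \<Rightarrow> real) \<Rightarrow> 'n smat \<Rightarrow> 'n smat" where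
  "Dop Q lam H = Q ** hadamard (Omega lam) (transpose Q ** H ** Q) ** transpose Q"

definition Dperp :: "('n::finite) smat \<Rightarrow> ('n \<Rightarrow> real) \<Rightarrow> 'n smat \<Rightarrow> 'n smat" where
  "Dperp Q lam H = H - Dop Q lam H"

definition Mop :: "(('m::finite) \<Rightarrow> ('n::finite) smat) \<Rightarrow> 'n smat \<Rightarrow> ('n \<Rightarrow> real) \<Rightarrow> 'n smat \<Rightarrow> 'n smat" where
  "Mop A Q lam H = Pop A (Dperp Q lam H) + Pperp A (Dop Q lam H)"

text \<open>H_O: the off-diagonal block of Q^T H Q (rows in the negative block, columns in the positive block).\<close>
definition HO :: "('n::finite) smat \<Rightarrow> 'n smat \<Rightarrow> 'n \<Rightarrow> 'n \<Rightarrow> real" where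
  "HO Q H i j = (transpose Q ** H ** Q) $ i $ j"

definition theta_inner :: "('n::finite) smat \<Rightarrow> ('n \<Rightarrow> real) \<Rightarrow> 'n smat \<Rightarrow> real" where
  "theta_inner Q lam H =
     (\<Sum>i\<in>{i. lam i < 0}. \<Sum>j\<in>{j. 0 < lam j}.
        (theta lam i j * HO Q H i j) * ((1 - theta lam i j) * HO Q H i j))"

end

theory Submission imports Defs begin

(*
  In the eigenbasis of Z, i.e. for G = Q^T H Q, the maps D and D^perp are the Hadamard multipliers
  by Omega and by 1 - Omega. Hence <D(H), D^perp(H)> = sum of Omega (1 - Omega) G^2 over all entries,
  which vanishes except on the two off-diagonal blocks, where Omega = Theta takes values in (0,1);
  by symmetry of G both blocks contribute the same amount.
  The norm identity is Pythagoras: expand ||H||^2 = ||D + D^perp||^2 and use that P and P^perp are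
  complementary orthogonal projections, so that ||M(H)||^2 = ||P D^perp||^2 + ||P^perp D||^2.
*)

lemma frob_inner_eq_inner: "frob_inner X Y = X \<bullet> Y"
  unfolding frob_inner_def trace_def matrix_matrix_mult_def transpose_def inner_vec_def
  by (simp add: inner_real_def, subst sum.swap, simp)

lemma frob_norm_eq_norm: "frob_norm X = norm X"
  by (simp add: frob_norm_def frob_inner_eq_inner norm_eq_sqrt_inner)

lemma inner_orthogonal_conj:
  fixes Q M N :: "real^'n::finite^'n"
  assumes "orthogonal_matrix Q"
  shows "(Q ** M ** transpose Q) \<bullet> (Q ** N ** transpose Q) = M \<bullet> N"
proof -
  have cancel: "X ** transpose Q ** Q = X" for X :: "real^'n^'n"
    using assms by (metis orthogonal_matrix_def matrix_mul_assoc matrix_mul_rid)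
  have "(Q ** M ** transpose Q) \<bullet> (Q ** N ** transpose Q)
      = trace (Q ** transpose M ** transpose Q ** (Q ** N ** transpose Q))"
    by (simp add: frob_inner_eq_inner[symmetric] frob_inner_def matrix_transpose_mul matrix_mul_assoc)
  also have "\<dots> = trace (Q ** (transpose M ** N ** transpose Q))"
    by (simp only: matrix_mul_assoc cancel)
  also have "\<dots> = trace (transpose M ** N ** transpose Q ** Q)"
    by (rule trace_mul_sym)
  also have "\<dots> = M \<bullet> N"
    by (simp only: cancel frob_inner_def[symmetric] frob_inner_eq_inner)
  finally show ?thesis .
qed

lemma matrix_mult_diff_middle:
  fixes Q X Y R :: "real^'n::finite^'n"
  shows "Q ** (X - Y) ** R = Q ** X ** R - Q ** Y ** R"
  by (simp add: matrix_matrix_mult_def vec_eq_iff sum_subtractf algebra_simps sum_distrib_right)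

lemma inner_Aadj: "Aadj A y \<bullet> Z = y \<bullet> Aop A Z"
  by (simp add: Aadj_def Aop_def inner_sum_left frob_inner_eq_inner inner_vec_def[of y])

lemma Aop_Aadj: "Aop A (Aadj A y) = AAadj A *v y"
  by (simp add: Aadj_def Aop_def AAadj_def frob_inner_eq_inner inner_sum_right
      matrix_vector_mult_def vec_eq_iff mult.commute)

lemma Aop_diff: "Aop A (X - Y) = Aop A X - Aop A Y"
  by (simp add: Aop_def frob_inner_eq_inner inner_diff_right vec_eq_iff)

lemma invertible_AAadj:
  assumes "surj (Aop A)"
  shows "invertible (AAadj A)"
proof -
  have "y = 0" if "AAadj A *v y = 0" for y
  proof -
    have "Aadj A y \<bullet> Aadj A y = 0"
      using that by (simp add: inner_Aadj Aop_Aadj)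
    moreover obtain Z where "Aop A Z = y"
      using assms by (metis surjD)
    ultimately have "y \<bullet> y = 0"
      using inner_Aadj[of A y Z] by simp
    then show "y = 0" by simp
  qed
  then show ?thesis
    using matrix_left_invertible_ker invertible_left_inverse by blast
qed

lemma Aop_Pop:
  assumes "surj (Aop A)"
  shows "Aop A (Pop A H) = Aop A H"
proof -
  have "AAadj A ** matrix_inv (AAadj A) = mat 1"
    using invertible_AAadj[OF assms] unfolding invertible_def matrix_inv_def
    by (metis (mono_tags, lifting) someI_ex)
  then show ?thesis
    by (simp add: Pop_def Aop_Aadj matrix_vector_mul_assoc)
qed

lemma inner_Pop_Pperp:
  assumes "surj (Aop A)"
  shows "Pop A X \<bullet> Pperp A Y = 0"
  by (simp add: Pop_def[of A X] Pperp_def inner_Aadj Aop_diff Aop_Pop[OF assms])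

lemma inner_self_Pop_Pperp:
  assumes "surj (Aop A)"
  shows "X \<bullet> X = Pop A X \<bullet> Pop A X + Pperp A X \<bullet> Pperp A X"
proof -
  have "X \<bullet> X = (Pop A X + Pperp A X) \<bullet> (Pop A X + Pperp A X)"
    by (simp add: Pperp_def)
  then show ?thesis
    using inner_Pop_Pperp[OF assms, of X X]
    by (simp add: inner_add_left inner_add_right inner_commute)
qed

lemma inner_self_add_minus_swapped_projections:
  assumes "surj (Aop A)"
  shows "(D + E) \<bullet> (D + E) - (Pop A E + Pperp A D) \<bullet> (Pop A E + Pperp A D)
       = Pop A D \<bullet> Pop A D + Pperp A E \<bullet> Pperp A E + 2 * (D \<bullet> E)"
  using inner_self_Pop_Pperp[OF assms, of D] inner_self_Pop_Pperp[OF assms, of E]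
    inner_Pop_Pperp[OF assms, of E D]
  by (simp add: inner_add_left inner_add_right inner_commute)

lemma theta_bounds:
  assumes "lam i < 0" "0 < lam j"
  shows "0 < theta lam i j" "theta lam i j < 1"
  using assms by (auto simp: theta_def divide_simps)

lemma Omega_mult_one_minus_Omega:
  "Omega lam $ i $ j * (1 - Omega lam $ i $ j)
     = (if lam i < 0 \<and> 0 < lam j then theta lam i j * (1 - theta lam i j) else 0)
     + (if lam j < 0 \<and> 0 < lam i then theta lam j i * (1 - theta lam j i) else 0)"
  by (auto simp: Omega_def)

lemma inner_hadamard_Omega:
  fixes G :: "real^'n::finite^'n"
  assumes "transpose G = G"
  shows "hadamard (Omega lam) G \<bullet> (G - hadamard (Omega lam) G)
       = 2 * (\<Sum>i\<in>{i. lam i < 0}. \<Sum>j\<in>{j. 0 < lam j}.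
                theta lam i j * (1 - theta lam i j) * (G $ i $ j)\<^sup>2)"
proof -
  define f where "f i j = (if lam i < 0 \<and> 0 < lam j
    then theta lam i j * (1 - theta lam i j) * (G $ i $ j)\<^sup>2 else 0)" for i j
  have G_sym: "G $ j $ i = G $ i $ j" for i j
    using assms by (metis transpose_def vec_lambda_beta)
  have entry: "hadamard (Omega lam) G $ i $ j * ((G - hadamard (Omega lam) G) $ i $ j)
      = f i j + f j i" for i j
  proof -
    have "hadamard (Omega lam) G $ i $ j * ((G - hadamard (Omega lam) G) $ i $ j)
        = Omega lam $ i $ j * (1 - Omega lam $ i $ j) * (G $ i $ j)\<^sup>2"
      by (simp add: hadamard_def power2_eq_square algebra_simps)
    then show ?thesis
      by (simp add: Omega_mult_one_minus_Omega f_def G_sym[of i j] distrib_right)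
  qed
  have "hadamard (Omega lam) G \<bullet> (G - hadamard (Omega lam) G) = (\<Sum>i\<in>UNIV. \<Sum>j\<in>UNIV. f i j + f j i)"
    unfolding inner_vec_def inner_real_def entry ..
  also have "\<dots> = 2 * (\<Sum>i\<in>UNIV. \<Sum>j\<in>UNIV. f i j)"
    by (simp add: sum.distrib sum.swap[of "\<lambda>i j. f j i"])
  also have "(\<Sum>i\<in>UNIV. \<Sum>j\<in>UNIV. f i j)
      = (\<Sum>i\<in>{i. lam i < 0}. \<Sum>j\<in>{j. 0 < lam j}. theta lam i j * (1 - theta lam i j) * (G $ i $ j)\<^sup>2)"
  proof -
    have "(\<Sum>j\<in>UNIV. f i j) = (if lam i < 0 then (\<Sum>j\<in>{j. 0 < lam j}.
        theta lam i j * (1 - theta lam i j) * (G $ i $ j)\<^sup>2) else 0)" for i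
      by (cases "lam i < 0") (simp_all add: f_def sum.If_cases)
    then show ?thesis by (simp add: sum.If_cases)
  qed
  finally show ?thesis .
qed

lemma theta_inner_eq:
  "theta_inner Q lam H = (\<Sum>i\<in>{i. lam i < 0}. \<Sum>j\<in>{j. 0 < lam j}.
      theta lam i j * (1 - theta lam i j) * (HO Q H i j)\<^sup>2)"
  by (simp add: theta_inner_def power2_eq_square algebra_simps)

lemma theta_summand_nonneg:
  assumes "lam i < 0" "0 < lam j"
  shows "0 \<le> theta lam i j * (1 - theta lam i j) * (HO Q H i j)\<^sup>2"
  using theta_bounds[OF assms] by simp

lemma theta_inner_nonneg: "0 \<le> theta_inner Q lam H"
  unfolding theta_inner_eq by (intro sum_nonneg) (auto intro: theta_summand_nonneg)

lemma HO_eq_0_if_theta_inner_eq_0: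
  assumes "theta_inner Q lam H = 0" "lam i < 0" "0 < lam j"
  shows "HO Q H i j = 0"
proof -
  have "(\<Sum>j\<in>{j. 0 < lam j}. theta lam i j * (1 - theta lam i j) * (HO Q H i j)\<^sup>2) = 0"
    using assms unfolding theta_inner_eq
    by (subst (asm) sum_nonneg_eq_0_iff) (auto intro!: sum_nonneg theta_summand_nonneg)
  then have "theta lam i j * (1 - theta lam i j) * (HO Q H i j)\<^sup>2 = 0"
    using assms(3) by (subst (asm) sum_nonneg_eq_0_iff) (auto intro!: theta_summand_nonneg assms(2))
  then show ?thesis
    using theta_bounds[OF assms(2,3)] by simp
qed

lemma inner_Dop_Dperp:
  assumes "orthogonal_matrix Q" "symm H"
  shows "Dop Q lam H \<bullet> Dperp Q lam H = 2 * theta_inner Q lam H"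
proof -
  define G where "G = transpose Q ** H ** Q"
  have H_conj: "H = Q ** G ** transpose Q"
    using assms(1) by (simp add: G_def orthogonal_matrix_def matrix_mul_assoc)
      (simp add: matrix_mul_assoc[symmetric])
  have "transpose G = G"
    using assms(2) by (simp add: G_def matrix_transpose_mul symm_def matrix_mul_assoc)
  have "Dperp Q lam H = Q ** (G - hadamard (Omega lam) G) ** transpose Q"
    by (simp add: Dperp_def Dop_def matrix_mult_diff_middle flip: G_def H_conj)
  then have "Dop Q lam H \<bullet> Dperp Q lam H = hadamard (Omega lam) G \<bullet> (G - hadamard (Omega lam) G)"
    by (simp add: Dop_def inner_orthogonal_conj[OF assms(1)] flip: G_def)
  also have "\<dots> = 2 * theta_inner Q lam H"
    using inner_hadamard_Omega[OF \<open>transpose G = G\<close>] by (simp add: theta_inner_eq HO_def G_def)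
  finally show ?thesis .
qed

theorem lemma2:
  fixes A :: "'m::finite \<Rightarrow> real^'n::finite^'n"
    and b :: "real^'m" and y :: "real^'m"
    and C X S Q H :: "real^'n^'n" and sigma :: real and lam :: "'n \<Rightarrow> real"
  assumes A_symm: "\<And>i. symm (A i)"
    and A_surj: "surj (Aop A)"
    and C_symm: "symm C"
    and primal: "Aop A X = b" "psd X"
    and dual: "Aadj A y + S = C" "psd S"
    and compl: "X ** S = 0"
    and strict_compl: "rank X + rank S = CARD('n)"
    and sigma: "sigma > 0"
    and Q_orth: "orthogonal_matrix Q"
    and eig: "X - sigma *\<^sub>R S = Q ** diagm lam ** transpose Q"
    and lam_nz: "\<And>i. lam i \<noteq> 0"
    and r_rank: "card {i. 0 < lam i} = rank X"
    and H_symm: "symm H"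
  shows "frob_inner (Dop Q lam H) (Dperp Q lam H) = 2 * theta_inner Q lam H
       \<and> 0 \<le> 2 * theta_inner Q lam H
       \<and> (frob_inner (Dop Q lam H) (Dperp Q lam H) = 0 \<longrightarrow>
            (\<forall>i j. lam i < 0 \<and> 0 < lam j \<longrightarrow> HO Q H i j = 0))
       \<and> (frob_norm H)\<^sup>2 - (frob_norm (Mop A Q lam H))\<^sup>2
         = (frob_norm (Pop A (Dop Q lam H)))\<^sup>2 + (frob_norm (Pperp A (Dperp Q lam H)))\<^sup>2
           + 4 * theta_inner Q lam H"
proof -
  have inner_D: "Dop Q lam H \<bullet> Dperp Q lam H = 2 * theta_inner Q lam H"
    using Q_orth H_symm by (rule inner_Dop_Dperp)
  have H_split: "Dop Q lam H + Dperp Q lam H = H"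
    by (simp add: Dperp_def)
  have M_split: "Pop A (Dperp Q lam H) + Pperp A (Dop Q lam H) = Mop A Q lam H"
    by (simp add: Mop_def)
  have "H \<bullet> H - Mop A Q lam H \<bullet> Mop A Q lam H
      = Pop A (Dop Q lam H) \<bullet> Pop A (Dop Q lam H) + Pperp A (Dperp Q lam H) \<bullet> Pperp A (Dperp Q lam H)
        + 4 * theta_inner Q lam H"
    using inner_self_add_minus_swapped_projections[OF A_surj, of "Dop Q lam H" "Dperp Q lam H"]
    unfolding H_split M_split inner_D by simp
  then show ?thesis
    unfolding frob_inner_eq_inner frob_norm_eq_norm power2_norm_eq_inner inner_D
    using theta_inner_nonneg HO_eq_0_if_theta_inner_eq_0 by auto
qed

end
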